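(* Let $\mathbf{T}\subset\mathbb{S}^3$ be a $\mathbb{Z}_2$-symmetric spherical tetrahedron with dihedral angles $A$, $B=E$, $C=F$, $D$ and edge lengths $l_A$, $l_B=l_E$, $l_C=l_F$, $l_D$. Put $a_+=\cos\frac{l_A+l_D}{2}$, $a_-=\cos\frac{l_A-l_D}{2}$, $b=\cos l_B$, $c=\cos l_C$, $\mathcal{A}_+=\cos\frac{A+D}{2}$, $\mathcal{A}_-=\cos\frac{D-A}{2}$, $\mathcal{B}=\cos B$, $\mathcal{C}=\cos C$. Then there exists a (symmetric) spherical tetrahedron $\mathbf{T}_s$, with dihedral angles $\alpha,\beta,\gamma$ (each appearing on a pair of opposite edges) and corresponding edge lengths $l_\alpha,l_\beta,l_\gamma$, whose Gram matrix is $$G_s=\begin{pmatrix}1&-\cos\alpha&-\cos\beta&-\cos\gamma\\-\cos\alpha&1&-\cos\gamma&-\cos\beta\\-\cos\beta&-\cos\gamma&1&-\cos\alpha\\-\cos\gamma&-\cos\beta&-\cos\alpha&1\end{pmatrix}=\begin{pmatrix}1&-\frac{\mathcal{A}_+}{\mathcal{A}_-}&-\frac{\mathcal{B}}{\mathcal{A}_-}&-\frac{\mathcal{C}}{\mathcal{A}_-}\\-\frac{\mathcal{A}_+}{\mathcal{A}_-}&1&-\frac{\mathcal{C}}{\mathcal{A}_-}&-\frac{\mathcal{B}}{\mathcal{A}_-}\\-\frac{\mathcal{B}}{\mathcal{A}_-}&-\frac{\mathcal{C}}{\mathcal{A}_-}&1&-\frac{\mathcal{A}_+}{\mathcal{A}_-}\\-\frac{\mathcal{C}}{\mathcal{A}_-}&-\frac{\mathcal{B}}{\mathcal{A}_-}&-\frac{\mathcal{A}_+}{\mathcal{A}_-}&1\end{pmatrix}$$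 and whose edge matrix is $$G^\star_s=\begin{pmatrix}1&\cos l_\alpha&\cos l_\beta&\cos l_\gamma\\\cos l_\alpha&1&\cos l_\gamma&\cos l_\beta\\\cos l_\beta&\cos l_\gamma&1&\cos l_\alpha\\\cos l_\gamma&\cos l_\beta&\cos l_\alpha&1\end{pmatrix}=\begin{pmatrix}1&\frac{a_+}{a_-}&\frac{b}{a_-}&\frac{c}{a_-}\\\frac{a_+}{a_-}&1&\frac{c}{a_-}&\frac{b}{a_-}\\\frac{b}{a_-}&\frac{c}{a_-}&1&\frac{a_+}{a_-}\\\frac{c}{a_-}&\frac{b}{a_-}&\frac{a_+}{a_-}&1\end{pmatrix}.$$
   Context: A spherical tetrahedron $\mathbf{T}\subset\mathbb{S}^3\subset\mathbb{R}^4$ is the intersection of $\mathbb{S}^3$ with the cone over four linearly independent unit vectors $\mathrm{p}_0,\dots,\mathrm{p}_3$. Edge lengths $l_{ij}\in[0,\pi]$: $\cos l_{ij}=\langle\mathrm{p}_i,\mathrm{p}_j\rangle$; dihedral angles $\alpha_{ij}\in[0,\pi]$: $\cos\alpha_{ij}=-\langle\mathrm{v}_i,\mathrm{v}_j\rangle$ with $\mathrm{v}_i$ the outer unit normal of the face opposite $\mathrm{p}_i$. The edge matrix of a tetrahedron is $(\langle\mathrm{p}_i,\mathrm{p}_j\rangle)_{i,j=0}^3$ and its Gram matrix is $(\langle\mathrm{v}_i,\mathrm{v}_j\rangle)_{i,j=0}^3$. Notation for $\mathbf{T}$: $l_A=l_{01}$, $l_B=l_{02}$, $l_C=l_{03}$,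 $l_D=l_{23}$, $l_E=l_{13}$, $l_F=l_{12}$; $A,\dots,F$ are the dihedral angles along the edges of lengths $l_A,\dots,l_F$. $\mathbf{T}$ is $\mathbb{Z}_2$-symmetric if invariant under rotation through $\pi$ about the axis through the midpoints of the edges $\mathrm{p}_0\mathrm{p}_1$ and $\mathrm{p}_2\mathrm{p}_3$ (so $l_B=l_E$, $l_C=l_F$, $B=E$, $C=F$). A tetrahedron is called symmetric if opposite edges have equal lengths (equivalently, equal dihedral angles). *)

theory Defs
  imports "HOL-Analysis.Analysis"
begin

definition spherical_tetrahedron :: "(nat \<Rightarrow> real^4) \<Rightarrow> bool" where
  "spherical_tetrahedron p \<longleftrightarrow>
     (\<forall>i<4. norm (p i) = 1) \<and> inj_on p {0..<4} \<and> independent (p ` {0..<4})"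

definition outer_normal :: "(nat \<Rightarrow> real^4) \<Rightarrow> nat \<Rightarrow> real^4" where
  "outer_normal p i = (THE v. norm v = 1 \<and> (\<forall>j<4. j \<noteq> i \<longrightarrow> v \<bullet> p j = 0) \<and> v \<bullet> p i < 0)"

definition edge_matrix :: "(nat \<Rightarrow> real^4) \<Rightarrow> nat \<Rightarrow> nat \<Rightarrow> real" where
  "edge_matrix p i j = p i \<bullet> p j"

definition gram_matrix :: "(nat \<Rightarrow> real^4) \<Rightarrow> nat \<Rightarrow> nat \<Rightarrow> real" where
  "gram_matrix p i j = outer_normal p i \<bullet> outer_normal p j"

text \<open>Edge length l_ij and dihedral angle alpha_ij (cos alpha_ij = - <v_i,v_j>);
alpha_ij is the dihedral angle along the edge joining the two vertices other than p i, p j.\<close>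

definition edge_len :: "(nat \<Rightarrow> real^4) \<Rightarrow> nat \<Rightarrow> nat \<Rightarrow> real" where
  "edge_len p i j = arccos (p i \<bullet> p j)"

definition dih :: "(nat \<Rightarrow> real^4) \<Rightarrow> nat \<Rightarrow> nat \<Rightarrow> real" where
  "dih p i j = arccos (- (outer_normal p i \<bullet> outer_normal p j))"

text \<open>Z_2-symmetry: the tetrahedron is invariant under the rotation through pi about
the axis through the midpoints of p0p1 and p2p3, i.e. the orthogonal map of R^4
swapping p0 <-> p1 and p2 <-> p3.\<close>

definition Z2_symmetric :: "(nat \<Rightarrow> real^4) \<Rightarrow> bool" where
  "Z2_symmetric p \<longleftrightarrow> (\<exists>f. orthogonal_transformation f \<and>
      f (p 0) = p 1 \<and> f (p 1) = p 0 \<and> f (p 2) = p 3 \<and> f (p 3) = p 2)"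

definition sym_pattern :: "real \<Rightarrow> real \<Rightarrow> real \<Rightarrow> real \<Rightarrow> nat \<Rightarrow> nat \<Rightarrow> real" where
  "sym_pattern d x y z i j =
     (if i = j then d
      else if {i, j} = {0, 1} \<or> {i, j} = {2, 3} then x
      else if {i, j} = {0, 2} \<or> {i, j} = {1, 3} then y
      else z)"

end

theory Submission
  imports Defs
begin

(*
  The half-turn f fixes p0 + p1 and p2 + p3 and reverses p0 - p1 and p2 - p3, so R^4 is the
  orthogonal sum of the two planes spanned by these vectors, and the combinations v0 +- v1,
  v2 +- v3 of the outer normals lie in the same planes.  Rescaling inside the planes,
    q(2k), q(2k+1) = mu (p(2k) + p(2k+1)) / (2 cos(l_k/2)) +- nu (p(2k) - p(2k+1)) / (2 sin(l_k/2))
  with l_0 = l_A, l_1 = l_D, and the same for the normals with the half-angles of D and A,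
  gives unit vectors whose inner products are the entries of G_s and G*_s.  The rescaled normals
  stay orthogonal to the opposite rescaled vertices because tan(l_A/2) tan(A/2) = tan(l_D/2) tan(D/2);
  this identity comes from computing the length of the normal combinations inside each plane
  by a 2x2 Gram determinant.
*)

lemma span_vertices_eq_UNIV:
  assumes "spherical_tetrahedron p"
  shows "span (p ` {0..<4}) = UNIV"
proof -
  have "independent (p ` {0..<4})" "card (p ` {0..<4}) = DIM(real^4)"
    using assms by (auto simp: spherical_tetrahedron_def card_image)
  then show ?thesis
    using card_ge_dim_independent[of "p ` {0..<4}" UNIV] by auto
qed

lemma vector_eq_if_inner_vertices_eq:
  assumes "spherical_tetrahedron p" "\<And>j. j < 4 \<Longrightarrow> x \<bullet> p j = y \<bullet> p j"
  shows "x = y"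
proof -
  have "orthogonal (x - y) z" if "z \<in> span (p ` {0..<4})" for z
    using that by (rule orthogonal_to_span) (auto simp: orthogonal_def inner_diff_left assms(2))
  then have "orthogonal (x - y) (x - y)"
    using span_vertices_eq_UNIV[OF assms(1)] by auto
  then show ?thesis by (simp add: orthogonal_def)
qed

lemma outer_normal_eqI:
  assumes T: "spherical_tetrahedron p" and "norm n = 1"
    and "\<And>j. j < 4 \<Longrightarrow> j \<noteq> i \<Longrightarrow> n \<bullet> p j = 0" and "n \<bullet> p i < 0"
  shows "outer_normal p i = n"
  unfolding outer_normal_def
proof (rule the_equality)
  show "norm n = 1 \<and> (\<forall>j<4. j \<noteq> i \<longrightarrow> n \<bullet> p j = 0) \<and> n \<bullet> p i < 0"
    using assms by auto
next
  fix w assume w: "norm w = 1 \<and> (\<forall>j<4. j \<noteq> i \<longrightarrow> w \<bullet> p j = 0) \<and> w \<bullet> p i < 0"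
  define c where "c = (w \<bullet> p i) / (n \<bullet> p i)"
  have "c > 0"
    using w assms(4) by (simp add: c_def divide_neg_neg)
  have "w = c *\<^sub>R n"
  proof (rule vector_eq_if_inner_vertices_eq[OF T])
    fix j :: nat assume "j < 4"
    then show "w \<bullet> p j = c *\<^sub>R n \<bullet> p j"
      using assms(3,4) w by (cases "j = i") (auto simp: c_def)
  qed
  moreover from this have "c = 1"
    using \<open>c > 0\<close> w assms(2) by simp
  ultimately show "w = n" by simp
qed

lemma ex_outer_normal:
  assumes T: "spherical_tetrahedron p" and "i < 4"
  shows "\<exists>n. norm n = 1 \<and> (\<forall>j<4. j \<noteq> i \<longrightarrow> n \<bullet> p j = 0) \<and> n \<bullet> p i < 0"
proof -
  let ?F = "p ` ({0..<4} - {i})"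
  have "card ?F \<le> 3"
    by (rule order_trans[OF card_image_le]) (auto simp: card_Diff_singleton_if \<open>i < 4\<close>)
  then have "dim ?F < DIM(real^4)"
    using dim_le_card[of ?F ?F] by (simp add: span_superset)
  then obtain x where "x \<noteq> 0" and x: "\<And>y. y \<in> span ?F \<Longrightarrow> orthogonal x y"
    using orthogonal_to_subspace_exists by blast
  have face: "x \<bullet> p j = 0" if "j < 4" "j \<noteq> i" for j
    using x[of "p j"] that by (simp add: span_base orthogonal_def)
  have "x \<bullet> p i \<noteq> 0"
  proof
    assume "x \<bullet> p i = 0"
    then have "x = 0"
      using face by (intro vector_eq_if_inner_vertices_eq[OF T]) (metis inner_zero_left)
    with \<open>x \<noteq> 0\<close> show False by simp
  qed
  then show ?thesis
    using \<open>x \<noteq> 0\<close> face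
    by (intro exI[of _ "(- sgn (x \<bullet> p i) / norm x) *\<^sub>R x"])
       (auto simp: abs_sgn sgn_if divide_neg_pos)
qed

lemma outer_normal:
  assumes "spherical_tetrahedron p" and "i < 4"
  shows "norm (outer_normal p i) = 1"
    and "\<And>j. j < 4 \<Longrightarrow> j \<noteq> i \<Longrightarrow> outer_normal p i \<bullet> p j = 0"
    and "outer_normal p i \<bullet> p i < 0"
proof -
  obtain n where n: "norm n = 1" "\<forall>j<4. j \<noteq> i \<longrightarrow> n \<bullet> p j = 0" "n \<bullet> p i < 0"
    using ex_outer_normal[OF assms] by blast
  then have "outer_normal p i = n"
    by (intro outer_normal_eqI[OF assms(1)]) auto
  with n show "norm (outer_normal p i) = 1"
    and "\<And>j. j < 4 \<Longrightarrow> j \<noteq> i \<Longrightarrow> outer_normal p i \<bullet> p j = 0"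
    and "outer_normal p i \<bullet> p i < 0" by auto
qed

lemma spherical_tetrahedronI_biorthogonal:
  assumes "\<And>i. i < 4 \<Longrightarrow> norm (q i) = 1"
    and "\<And>i j. i < 4 \<Longrightarrow> j < 4 \<Longrightarrow> j \<noteq> i \<Longrightarrow> w i \<bullet> q j = 0"
    and "\<And>i. i < 4 \<Longrightarrow> w i \<bullet> q i \<noteq> 0"
  shows "spherical_tetrahedron q"
proof -
  have "inj_on q {0..<4}"
    by (rule inj_onI) (metis assms(2,3) atLeastLessThan_iff)
  moreover have "independent (q ` {0..<4})"
    unfolding independent_explicit
  proof (intro conjI allI impI ballI)
    fix c :: "real^4 \<Rightarrow> real" and u
    assume sum: "(\<Sum>x\<in>q ` {0..<4}. c x *\<^sub>R x) = 0" and "u \<in> q ` {0..<4}"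
    then obtain i where i: "i < 4" "u = q i" by auto
    have "w i \<bullet> x = 0" if "x \<in> q ` {0..<4} - {q i}" for x
    proof -
      from that obtain j where "j < 4" "x = q j" "j \<noteq> i"
        by (metis DiffE image_iff insertI1 atLeastLessThan_iff)
      then show ?thesis using assms(2) i by simp
    qed
    then have "(\<Sum>x\<in>q ` {0..<4} - {q i}. c x * (w i \<bullet> x)) = 0"
      by simp
    then have "0 = c (q i) * (w i \<bullet> q i)"
      using arg_cong[OF sum, of "inner (w i)"] i
      by (simp add: sum.remove[of _ "q i"] inner_add_right inner_sum_right)
    then show "c u = 0"
      using assms(3) i by simp
  qed simp
  ultimately show ?thesis
    using assms(1) by (simp add: spherical_tetrahedron_def)
qed

lemma outer_normal_orthogonal_transformation:
  assumes T: "spherical_tetrahedron p" and f: "orthogonal_transformation f"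
    and \<sigma>: "bij_betw \<sigma> {0..<4} {0..<4}" and fp: "\<And>j. j < 4 \<Longrightarrow> f (p j) = p (\<sigma> j)"
    and "i < 4"
  shows "f (outer_normal p i) = outer_normal p (\<sigma> i)"
proof (rule sym, rule outer_normal_eqI[OF T])
  have f_inner: "f x \<bullet> f y = x \<bullet> y" for x y
    using f by (simp add: orthogonal_transformation_def)
  show "norm (f (outer_normal p i)) = 1"
    using f outer_normal(1)[OF T \<open>i < 4\<close>] by (simp add: orthogonal_transformation_norm)
  show "f (outer_normal p i) \<bullet> p (\<sigma> i) < 0"
    using outer_normal(3)[OF T \<open>i < 4\<close>] by (simp add: fp[symmetric] \<open>i < 4\<close> f_inner)
  fix k assume "k < 4" "k \<noteq> \<sigma> i"
  moreover have "k \<in> \<sigma> ` {0..<4}"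
    using \<sigma> \<open>k < 4\<close> by (simp add: bij_betw_def)
  ultimately obtain j where "j < 4" "k = \<sigma> j" "j \<noteq> i"
    by (metis atLeastLessThan_iff imageE)
  then show "f (outer_normal p i) \<bullet> p k = 0"
    using outer_normal(2)[OF T \<open>i < 4\<close>] by (simp add: fp[symmetric] f_inner)
qed

lemma abs_gram_matrix_le_1:
  assumes "spherical_tetrahedron q" "i < 4" "j < 4"
  shows "\<bar>gram_matrix q i j\<bar> \<le> 1"
  using Cauchy_Schwarz_ineq2[of "outer_normal q i" "outer_normal q j"]
  by (simp add: gram_matrix_def outer_normal(1)[OF assms(1)] assms(2,3))

lemma abs_edge_matrix_le_1:
  assumes "spherical_tetrahedron q" "i < 4" "j < 4"
  shows "\<bar>edge_matrix q i j\<bar> \<le> 1"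
  using Cauchy_Schwarz_ineq2[of "q i" "q j"] assms
  by (simp add: edge_matrix_def spherical_tetrahedron_def)

lemma cos_edge_len:
  assumes "spherical_tetrahedron p" "i < 4" "j < 4"
  shows "cos (edge_len p i j) = p i \<bullet> p j"
  using abs_edge_matrix_le_1[OF assms]
  by (simp add: edge_len_def edge_matrix_def abs_le_iff)

lemma cos_dih:
  assumes "spherical_tetrahedron p" "i < 4" "j < 4"
  shows "cos (dih p i j) = - (outer_normal p i \<bullet> outer_normal p j)"
  using abs_gram_matrix_le_1[OF assms]
  by (simp add: dih_def gram_matrix_def abs_le_iff)

lemma symmetric_tetrahedron_angles:
  assumes T: "spherical_tetrahedron q"
    and G: "\<forall>i<4. \<forall>j<4. gram_matrix q i j = sym_pattern 1 (- a) (- b) (- c) i j"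
    and E: "\<forall>i<4. \<forall>j<4. edge_matrix q i j = sym_pattern 1 x y z i j"
  shows "\<exists>\<alpha> \<beta> \<gamma> l\<alpha> l\<beta> l\<gamma>.
       dih q 0 1 = \<alpha> \<and> dih q 2 3 = \<alpha> \<and> dih q 0 2 = \<beta> \<and> dih q 1 3 = \<beta> \<and>
       dih q 0 3 = \<gamma> \<and> dih q 1 2 = \<gamma> \<and>
       edge_len q 0 1 = l\<alpha> \<and> edge_len q 2 3 = l\<alpha> \<and> edge_len q 0 2 = l\<beta> \<and>
       edge_len q 1 3 = l\<beta> \<and> edge_len q 0 3 = l\<gamma> \<and> edge_len q 1 2 = l\<gamma> \<and>
       (\<forall>i<4. \<forall>j<4.
          gram_matrix q i j = sym_pattern 1 (- cos \<alpha>) (- cos \<beta>) (- cos \<gamma>) i j \<and>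
          gram_matrix q i j = sym_pattern 1 (- a) (- b) (- c) i j \<and>
          edge_matrix q i j = sym_pattern 1 (cos l\<alpha>) (cos l\<beta>) (cos l\<gamma>) i j \<and>
          edge_matrix q i j = sym_pattern 1 x y z i j)"
proof -
  have gram: "gram_matrix q 0 1 = - a" "gram_matrix q 2 3 = - a" "gram_matrix q 0 2 = - b"
      "gram_matrix q 1 3 = - b" "gram_matrix q 0 3 = - c" "gram_matrix q 1 2 = - c"
    and edge: "edge_matrix q 0 1 = x" "edge_matrix q 2 3 = x" "edge_matrix q 0 2 = y"
      "edge_matrix q 1 3 = y" "edge_matrix q 0 3 = z" "edge_matrix q 1 2 = z"
    using G E by (simp_all add: sym_pattern_def doubleton_eq_iff)
  have "\<bar>a\<bar> \<le> 1" "\<bar>b\<bar> \<le> 1" "\<bar>c\<bar> \<le> 1"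
    using abs_gram_matrix_le_1[OF T, of 0 1] abs_gram_matrix_le_1[OF T, of 0 2]
      abs_gram_matrix_le_1[OF T, of 0 3] gram by simp_all
  moreover have "\<bar>x\<bar> \<le> 1" "\<bar>y\<bar> \<le> 1" "\<bar>z\<bar> \<le> 1"
    using abs_edge_matrix_le_1[OF T, of 0 1] abs_edge_matrix_le_1[OF T, of 0 2]
      abs_edge_matrix_le_1[OF T, of 0 3] edge by simp_all
  ultimately have cos: "cos (arccos a) = a" "cos (arccos b) = b" "cos (arccos c) = c"
    "cos (arccos x) = x" "cos (arccos y) = y" "cos (arccos z) = z"
    by (simp_all add: abs_le_iff)
  have dih: "dih q 0 1 = arccos a" "dih q 2 3 = arccos a" "dih q 0 2 = arccos b"
    "dih q 1 3 = arccos b" "dih q 0 3 = arccos c" "dih q 1 2 = arccos c"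
    unfolding dih_def gram_matrix_def[symmetric] gram by simp_all
  have len: "edge_len q 0 1 = arccos x" "edge_len q 2 3 = arccos x" "edge_len q 0 2 = arccos y"
    "edge_len q 1 3 = arccos y" "edge_len q 0 3 = arccos z" "edge_len q 1 2 = arccos z"
    unfolding edge_len_def edge_matrix_def[symmetric] edge by simp_all
  have "\<forall>i<4. \<forall>j<4.
      gram_matrix q i j = sym_pattern 1 (- cos (arccos a)) (- cos (arccos b)) (- cos (arccos c)) i j \<and>
      gram_matrix q i j = sym_pattern 1 (- a) (- b) (- c) i j \<and>
      edge_matrix q i j = sym_pattern 1 (cos (arccos x)) (cos (arccos y)) (cos (arccos z)) i j \<and>
      edge_matrix q i j = sym_pattern 1 x y z i j"
    using G E unfolding cos by simp
  with dih len show ?thesis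
    by (intro exI conjI) assumption+
qed

lemma abs_inner_less_one_if_separated:
  fixes a b u :: "'a::real_inner"
  assumes "norm a = 1" "norm b = 1" "u \<bullet> a = 0" "u \<bullet> b \<noteq> 0"
  shows "\<bar>a \<bullet> b\<bar> < 1"
proof -
  have "b \<noteq> a" "b \<noteq> - a"
    using assms(3,4) by auto
  then have "\<bar>a \<bullet> b\<bar> \<noteq> norm a * norm b"
    using norm_cauchy_schwarz_abs_eq[of a b] assms(1,2) by auto
  then show ?thesis
    using Cauchy_Schwarz_ineq2[of a b] assms(1,2) by simp
qed

lemma mem_span_if_orthogonal_complement:
  fixes u :: "'a::real_inner"
  assumes "span (A \<union> B) = UNIV" and "\<And>a b. a \<in> A \<Longrightarrow> b \<in> B \<Longrightarrow> a \<bullet> b = 0"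
    and "\<And>b. b \<in> B \<Longrightarrow> u \<bullet> b = 0"
  shows "u \<in> span A"
proof -
  obtain x y where x: "x \<in> span A" and y: "y \<in> span B" and u: "u = x + y"
    using assms(1) unfolding span_Un by blast
  have "orthogonal y a" if "a \<in> A" for a
    using orthogonal_to_span[OF y, of a] assms(2)[OF that] by (simp add: orthogonal_def inner_commute)
  then have "orthogonal y x"
    using orthogonal_to_span[OF x] by blast
  moreover have "orthogonal u y"
    using orthogonal_to_span[OF y, of u] assms(3) by (simp add: orthogonal_def)
  ultimately have "y \<bullet> y = 0"
    by (simp add: u orthogonal_def inner_add_left inner_commute[of y x])
  then show ?thesis using x u by simp
qed

lemma inner_gram_det_if_mem_span_pair:
  fixes e f u :: "'a::real_inner"
  assumes "u \<in> span {e, f}" and "u \<bullet> f = 0"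
  shows "(u \<bullet> u) * ((e \<bullet> e) * (f \<bullet> f) - (e \<bullet> f)\<^sup>2) = (u \<bullet> e)\<^sup>2 * (f \<bullet> f)"
proof -
  obtain \<alpha> \<beta> where "u - \<alpha> *\<^sub>R e = \<beta> *\<^sub>R f"
    using assms(1) by (auto simp: span_insert span_singleton)
  then have u: "u = \<alpha> *\<^sub>R e + \<beta> *\<^sub>R f"
    by (simp add: algebra_simps)
  have "u \<bullet> u = \<alpha> * (u \<bullet> e) + \<beta> * (u \<bullet> f)"
    by (subst (2) u) (simp add: inner_add_right)
  also have "\<dots> = \<alpha> * (u \<bullet> e)"
    using assms(2) by simp
  finally have uu: "u \<bullet> u = \<alpha> * (u \<bullet> e)" .
  have \<beta>: "\<beta> * (f \<bullet> f) = - \<alpha> * (e \<bullet> f)"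
    using assms(2) by (simp add: u inner_add_left)
  have "u \<bullet> e = \<alpha> * (e \<bullet> e) + \<beta> * (e \<bullet> f)"
    by (simp add: u inner_add_left inner_commute[of f e])
  then have "(u \<bullet> e) * (f \<bullet> f) = \<alpha> * (e \<bullet> e) * (f \<bullet> f) + (e \<bullet> f) * (\<beta> * (f \<bullet> f))"
    by (simp add: algebra_simps)
  also have "\<dots> = \<alpha> * ((e \<bullet> e) * (f \<bullet> f) - (e \<bullet> f)\<^sup>2)"
    by (simp add: \<beta> power2_eq_square algebra_simps)
  finally show ?thesis
    by (simp add: uu power2_eq_square)
qed

definition sym_frame ::
    "(nat \<Rightarrow> real) \<Rightarrow> (nat \<Rightarrow> real) \<Rightarrow> (nat \<Rightarrow> 'a) \<Rightarrow> (nat \<Rightarrow> 'a) \<Rightarrow> nat \<Rightarrow> 'a::real_vector"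
  where "sym_frame \<alpha> \<beta> P M i =
    \<alpha> (i div 2) *\<^sub>R P (i div 2) + ((-1) ^ i * \<beta> (i div 2)) *\<^sub>R M (i div 2)"

lemma inner_sym_frame:
  fixes P M P' M' :: "nat \<Rightarrow> 'a::real_inner"
  assumes "P (i div 2) \<bullet> M' (j div 2) = 0" and "M (i div 2) \<bullet> P' (j div 2) = 0"
  shows "sym_frame \<alpha> \<beta> P M i \<bullet> sym_frame \<alpha>' \<beta>' P' M' j =
    \<alpha> (i div 2) * \<alpha>' (j div 2) * (P (i div 2) \<bullet> P' (j div 2)) +
    (-1) ^ (i + j) * (\<beta> (i div 2) * \<beta>' (j div 2) * (M (i div 2) \<bullet> M' (j div 2)))"
  using assms by (simp add: sym_frame_def inner_add_left inner_add_right power_add algebra_simps)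

lemma sym_table_eqI:
  fixes F :: "nat \<Rightarrow> nat \<Rightarrow> real"
  assumes "i < 4" "j < 4" and "\<And>i j. F i j = F j i" and "\<And>i. i < 4 \<Longrightarrow> F i i = d"
    and "F 0 1 = x" "F 2 3 = y" "F 0 2 = b" "F 1 3 = b" "F 0 3 = c" "F 1 2 = c"
  shows "F i j = (if i = j then d else if {i, j} = {0, 1} then x else if {i, j} = {2, 3} then y
     else if {i, j} = {0, 2} \<or> {i, j} = {1, 3} then b else c)"
proof -
  have "i \<in> {0, 1, 2, 3}" "j \<in> {0, 1, 2, 3}"
    using assms(1,2) by auto
  then show ?thesis
    using assms(3-) by (auto simp: doubleton_eq_iff)
qed

lemma sym_pattern_eqI:
  assumes "i < 4" "j < 4"
    and "\<And>k l. k < 2 \<Longrightarrow> l < 2 \<Longrightarrow> U k l = (if k = l then u else u')"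
    and "\<And>k l. k < 2 \<Longrightarrow> l < 2 \<Longrightarrow> V k l = (if k = l then v else v')"
  shows "U (i div 2) (j div 2) + (-1) ^ (i + j) * V (i div 2) (j div 2) =
    sym_pattern (u + v) (u - v) (u' + v') (u' - v') i j"
proof -
  have "i \<in> {0, 1, 2, 3}" "j \<in> {0, 1, 2, 3}"
    using assms(1,2) by auto
  then show ?thesis
    using assms(3,4) by (auto simp: sym_pattern_def doubleton_eq_iff)
qed

lemma scaled_pair_inner:
  fixes c :: "nat \<Rightarrow> real"
  assumes "k < 2" "l < 2" "0 < c 0" "0 < c 1" "0 < d" "\<mu>\<^sup>2 = c 0 * c 1 / d"
  shows "\<mu> / (2 * c k) * (\<mu> / (2 * c l)) * (if k = l then 4 * (c k)\<^sup>2 else 2 * x) =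
    (if k = l then \<mu>\<^sup>2 else x / (2 * d))"
proof -
  have "k \<in> {0, 1}" "l \<in> {0, 1}" using assms(1,2) by auto
  then show ?thesis
    using assms(3-) by (auto simp: field_simps power2_eq_square)
qed

locale Z2_symmetric_tetrahedron =
  fixes p :: "nat \<Rightarrow> real^4"
  assumes tetrahedron: "spherical_tetrahedron p" and Z2: "Z2_symmetric p"
begin

abbreviation v :: "nat \<Rightarrow> real^4" where "v \<equiv> outer_normal p"

text \<open>Below, an index \<open>k < 2\<close> names the pair of vertices \<open>2k, 2k + 1\<close> exchanged by
  the symmetry.\<close>

lemma vertex_unit: "i < 4 \<Longrightarrow> p i \<bullet> p i = 1"
  using tetrahedron by (simp add: spherical_tetrahedron_def flip: power2_norm_eq_inner)

lemma normal_unit: "i < 4 \<Longrightarrow> v i \<bullet> v i = 1"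
  using outer_normal(1)[OF tetrahedron] by (simp flip: power2_norm_eq_inner)

lemma swap_inner:
  "p 1 \<bullet> p 3 = p 0 \<bullet> p 2" "p 1 \<bullet> p 2 = p 0 \<bullet> p 3"
  "v 1 \<bullet> v 3 = v 0 \<bullet> v 2" "v 1 \<bullet> v 2 = v 0 \<bullet> v 3"
  "v 1 \<bullet> p 1 = v 0 \<bullet> p 0" "v 3 \<bullet> p 3 = v 2 \<bullet> p 2"
proof -
  obtain f where f: "orthogonal_transformation f"
    "f (p 0) = p 1" "f (p 1) = p 0" "f (p 2) = p 3" "f (p 3) = p 2"
    using Z2 unfolding Z2_symmetric_def by blast
  define \<sigma> :: "nat \<Rightarrow> nat" where "\<sigma> j = (if even j then j + 1 else j - 1)" for j
  have \<sigma>: "\<sigma> 0 = 1" "\<sigma> 1 = 0" "\<sigma> 2 = 3" "\<sigma> 3 = 2"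
    by (simp_all add: \<sigma>_def)
  have fp: "f (p j) = p (\<sigma> j)" if "j < 4" for j
  proof -
    have "j \<in> {0, 1, 2, 3}" using that by auto
    then show ?thesis using f \<sigma> by auto
  qed
  have "bij_betw \<sigma> {0..<4} {0..<4}"
    by (rule bij_betw_byWitness[where f' = \<sigma>]) (auto simp: \<sigma>_def)
  then have fv: "f (v i) = v (\<sigma> i)" if "i < 4" for i
    using outer_normal_orthogonal_transformation[OF tetrahedron f(1) _ fp that] by blast
  have f_inner: "f x \<bullet> f y = x \<bullet> y" for x y
    using f(1) by (simp add: orthogonal_transformation_def)
  show "p 1 \<bullet> p 3 = p 0 \<bullet> p 2" "p 1 \<bullet> p 2 = p 0 \<bullet> p 3"
    using f_inner[of "p 0" "p 2"] f_inner[of "p 0" "p 3"] f by simp_all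
  show "v 1 \<bullet> v 3 = v 0 \<bullet> v 2" "v 1 \<bullet> v 2 = v 0 \<bullet> v 3"
    using f_inner[of "v 0" "v 2"] f_inner[of "v 0" "v 3"] fv[of 0] fv[of 2] fv[of 3] \<sigma> by simp_all
  show "v 1 \<bullet> p 1 = v 0 \<bullet> p 0" "v 3 \<bullet> p 3 = v 2 \<bullet> p 2"
    using f_inner[of "v 0" "p 0"] f_inner[of "v 2" "p 2"] fv[of 0] fv[of 2] f \<sigma> by simp_all
qed

definition pair_len :: "nat \<Rightarrow> real" where "pair_len k = edge_len p (2 * k) (2 * k + 1)"

definition pair_dih :: "nat \<Rightarrow> real" where "pair_dih k = dih p (2 * k) (2 * k + 1)"

text \<open>The sine of the spherical distance from \<open>p (2k)\<close> to the opposite face.\<close>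

definition sin_height :: "nat \<Rightarrow> real" where "sin_height k = - (v (2 * k) \<bullet> p (2 * k))"

definition "vertex_sum k = p (2 * k) + p (2 * k + 1)"

definition "vertex_diff k = p (2 * k) - p (2 * k + 1)"

definition "normal_sum k = v (2 * k) + v (2 * k + 1)"

definition "normal_diff k = v (2 * k) - v (2 * k + 1)"

text \<open>These equations mention the numeral \<open>1 :: nat\<close>, which the simplifier rewrites to
  \<open>Suc 0\<close> in goals; they are therefore supplied with \<open>using\<close> rather than as rewrite rules.\<close>

lemma pair_simps:
  "pair_len 0 = edge_len p 0 1" "pair_len 1 = edge_len p 2 3"
  "pair_dih 0 = dih p 0 1" "pair_dih 1 = dih p 2 3"
  "sin_height 0 = - (v 0 \<bullet> p 0)" "sin_height 1 = - (v 2 \<bullet> p 2)"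
  "vertex_sum 0 = p 0 + p 1" "vertex_sum 1 = p 2 + p 3"
  "vertex_diff 0 = p 0 - p 1" "vertex_diff 1 = p 2 - p 3"
  "normal_sum 0 = v 0 + v 1" "normal_sum 1 = v 2 + v 3"
  "normal_diff 0 = v 0 - v 1" "normal_diff 1 = v 2 - v 3"
  by (simp_all add: pair_len_def pair_dih_def sin_height_def vertex_sum_def vertex_diff_def
      normal_sum_def normal_diff_def)

lemma sin_height_pos: "k < 2 \<Longrightarrow> 0 < sin_height k"
  using outer_normal(3)[OF tetrahedron] by (simp add: sin_height_def)

lemma vertex_inner:
  assumes "i < 4" "j < 4"
  shows "p i \<bullet> p j =
    (if i = j then 1 else if {i, j} = {0, 1} then cos (pair_len 0)
     else if {i, j} = {2, 3} then cos (pair_len 1)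
     else if {i, j} = {0, 2} \<or> {i, j} = {1, 3} then cos (edge_len p 0 2) else cos (edge_len p 0 3))"
  using assms vertex_unit inner_commute swap_inner(1,2) pair_simps
  by (intro sym_table_eqI) (simp_all add: cos_edge_len[OF tetrahedron])

lemma normal_inner:
  assumes "i < 4" "j < 4"
  shows "v i \<bullet> v j =
    (if i = j then 1 else if {i, j} = {0, 1} then - cos (pair_dih 0)
     else if {i, j} = {2, 3} then - cos (pair_dih 1)
     else if {i, j} = {0, 2} \<or> {i, j} = {1, 3} then - cos (dih p 1 3) else - cos (dih p 1 2))"
  using assms normal_unit inner_commute swap_inner(3,4) pair_simps
  by (intro sym_table_eqI) (simp_all add: cos_dih[OF tetrahedron])

lemma normal_vertex:
  assumes "i < 4" "j < 4"
  shows "v i \<bullet> p j = (if i = j then - sin_height (i div 2) else 0)"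
proof -
  have "i \<in> {0, 1, 2, 3}"
    using assms by auto
  then show ?thesis
    using outer_normal(2)[OF tetrahedron] assms swap_inner(5,6) pair_simps by auto
qed

lemma pair_len_bounds:
  assumes "k < 2"
  shows "0 < pair_len k" "pair_len k < pi"
proof -
  have "\<bar>p (2 * k) \<bullet> p (2 * k + 1)\<bar> < 1"
    using assms tetrahedron outer_normal(2,3)[OF tetrahedron, of "2 * k + 1"]
    by (intro abs_inner_less_one_if_separated[where u = "v (2 * k + 1)"])
       (auto simp: spherical_tetrahedron_def)
  then show "0 < pair_len k" "pair_len k < pi"
    using arccos_lt_bounded by (auto simp: pair_len_def edge_len_def abs_less_iff)
qed

lemma pair_dih_bounds:
  assumes "k < 2"
  shows "0 < pair_dih k" "pair_dih k < pi"
proof -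
  have "\<bar>v (2 * k) \<bullet> v (2 * k + 1)\<bar> < 1"
    using assms outer_normal(1,3)[OF tetrahedron, of "2 * k + 1"]
      outer_normal(1)[OF tetrahedron, of "2 * k"] outer_normal(2)[OF tetrahedron, of "2 * k" "2 * k + 1"]
    by (intro abs_inner_less_one_if_separated[where u = "p (2 * k + 1)"]) (auto simp: inner_commute)
  then show "0 < pair_dih k" "pair_dih k < pi"
    using arccos_lt_bounded by (auto simp: pair_dih_def dih_def abs_less_iff)
qed

definition "cos_half_len k = cos (pair_len k / 2)"
definition "sin_half_len k = sin (pair_len k / 2)"
definition "cos_half_dih k = cos (pair_dih k / 2)"
definition "sin_half_dih k = sin (pair_dih k / 2)"

lemma half_angles_pos:
  assumes "k < 2"
  shows "0 < cos_half_len k" "0 < sin_half_len k" "0 < cos_half_dih k" "0 < sin_half_dih k"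
  using pair_len_bounds[OF assms] pair_dih_bounds[OF assms]
  by (auto simp: cos_half_len_def sin_half_len_def cos_half_dih_def sin_half_dih_def
      intro!: cos_gt_zero_pi sin_gt_zero)

lemma half_angles_sq:
  "4 * (cos_half_len k)\<^sup>2 = 2 + 2 * cos (pair_len k)"
  "4 * (sin_half_len k)\<^sup>2 = 2 - 2 * cos (pair_len k)"
  "4 * (sin_half_dih k)\<^sup>2 = 2 - 2 * cos (pair_dih k)"
  "4 * (cos_half_dih k)\<^sup>2 = 2 + 2 * cos (pair_dih k)"
  using cos_double_cos[of "pair_len k / 2"] cos_double_sin[of "pair_len k / 2"]
    cos_double_cos[of "pair_dih k / 2"] cos_double_sin[of "pair_dih k / 2"]
  by (simp_all add: cos_half_len_def sin_half_len_def cos_half_dih_def sin_half_dih_def)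

lemmas inner_expand = inner_add_left inner_add_right inner_diff_left inner_diff_right

lemma pair_inner:
  assumes "k < 2" "l < 2"
  shows "vertex_sum k \<bullet> vertex_sum l =
      (if k = l then 4 * (cos_half_len k)\<^sup>2 else 2 * (cos (edge_len p 0 2) + cos (edge_len p 0 3)))"
    and "vertex_diff k \<bullet> vertex_diff l =
      (if k = l then 4 * (sin_half_len k)\<^sup>2 else 2 * (cos (edge_len p 0 2) - cos (edge_len p 0 3)))"
    and "normal_sum k \<bullet> normal_sum l =
      (if k = l then 4 * (sin_half_dih k)\<^sup>2 else 2 * (- cos (dih p 1 3) - cos (dih p 1 2)))"
    and "normal_diff k \<bullet> normal_diff l =
      (if k = l then 4 * (cos_half_dih k)\<^sup>2 else 2 * (cos (dih p 1 2) - cos (dih p 1 3)))"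
    and "normal_sum k \<bullet> vertex_sum l = (if k = l then - 2 * sin_height k else 0)"
    and "normal_diff k \<bullet> vertex_diff l = (if k = l then - 2 * sin_height k else 0)"
  using assms pair_simps half_angles_sq
  by (auto simp: less_2_cases_iff inner_expand vertex_inner normal_inner normal_vertex doubleton_eq_iff)

lemma pair_orthogonal:
  assumes "k < 2" "l < 2"
  shows "vertex_sum k \<bullet> vertex_diff l = 0" "vertex_diff k \<bullet> vertex_sum l = 0"
    "normal_sum k \<bullet> normal_diff l = 0" "normal_diff k \<bullet> normal_sum l = 0"
    "normal_sum k \<bullet> vertex_diff l = 0" "normal_diff k \<bullet> vertex_sum l = 0"
  using assms pair_simps
  by (auto simp: less_2_cases_iff inner_expand vertex_inner normal_inner normal_vertex doubleton_eq_iff)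

lemma span_vertex_sums_diffs:
  "span ({vertex_sum 0, vertex_sum 1} \<union> {vertex_diff 0, vertex_diff 1}) = UNIV"
  (is "span ?S = UNIV")
proof -
  have "p j \<in> span ?S" if "j < 4" for j
  proof -
    define k where "k = j div 2"
    have k: "k \<in> {0, 1}" "j = 2 * k \<or> j = 2 * k + 1"
      using \<open>j < 4\<close> unfolding k_def by auto
    have "vertex_sum k \<in> span ?S" "vertex_diff k \<in> span ?S"
      using k(1) by (auto intro: span_base)
    moreover have "p (2 * k) = (1 / 2) *\<^sub>R (vertex_sum k + vertex_diff k)"
      "p (2 * k + 1) = (1 / 2) *\<^sub>R (vertex_sum k - vertex_diff k)"
      by (simp_all add: vertex_sum_def vertex_diff_def flip: scaleR_2)
    ultimately show ?thesis
      using k(2) by (auto intro!: span_scale span_add span_diff)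
  qed
  then have "span (p ` {0..<4}) \<subseteq> span ?S"
    by (intro span_minimal) auto
  then show ?thesis
    using span_vertices_eq_UNIV[OF tetrahedron] by auto
qed

lemma normal_sum_mem_span: "k < 2 \<Longrightarrow> normal_sum k \<in> span {vertex_sum 0, vertex_sum 1}"
  using span_vertex_sums_diffs pair_orthogonal
  by (intro mem_span_if_orthogonal_complement[where B = "{vertex_diff 0, vertex_diff 1}"]) auto

lemma normal_diff_mem_span: "k < 2 \<Longrightarrow> normal_diff k \<in> span {vertex_diff 0, vertex_diff 1}"
  using span_vertex_sums_diffs pair_orthogonal
  by (intro mem_span_if_orthogonal_complement[where B = "{vertex_sum 0, vertex_sum 1}"])
     (auto simp: Un_commute)

text \<open>A quarter of the Gram determinants of \<open>vertex_sum 0, vertex_sum 1\<close> and of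
  \<open>vertex_diff 0, vertex_diff 1\<close>.\<close>

definition "sum_gram_det =
  4 * (cos_half_len 0 * cos_half_len 1)\<^sup>2 - (cos (edge_len p 0 2) + cos (edge_len p 0 3))\<^sup>2"

definition "diff_gram_det =
  4 * (sin_half_len 0 * sin_half_len 1)\<^sup>2 - (cos (edge_len p 0 2) - cos (edge_len p 0 3))\<^sup>2"

lemma height_relations:
  assumes "k < 2"
  shows "(sin_half_dih k)\<^sup>2 * sum_gram_det = (sin_height k * cos_half_len (1 - k))\<^sup>2"
    and "(cos_half_dih k)\<^sup>2 * diff_gram_det = (sin_height k * sin_half_len (1 - k))\<^sup>2"
proof -
  have "k \<in> {0, 1}" using assms by auto
  have span: "normal_sum k \<in> span {vertex_sum k, vertex_sum (1 - k)}"
    "normal_diff k \<in> span {vertex_diff k, vertex_diff (1 - k)}"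
    using normal_sum_mem_span[OF assms] normal_diff_mem_span[OF assms] \<open>k \<in> {0, 1}\<close>
    by (auto simp: insert_commute)
  show "(sin_half_dih k)\<^sup>2 * sum_gram_det = (sin_height k * cos_half_len (1 - k))\<^sup>2"
    using inner_gram_det_if_mem_span_pair[OF span(1)] \<open>k \<in> {0, 1}\<close>
    by (auto simp: sum_gram_det_def pair_inner power2_eq_square algebra_simps)
  show "(cos_half_dih k)\<^sup>2 * diff_gram_det = (sin_height k * sin_half_len (1 - k))\<^sup>2"
    using inner_gram_det_if_mem_span_pair[OF span(2)] \<open>k \<in> {0, 1}\<close>
    by (auto simp: diff_gram_det_def pair_inner power2_eq_square algebra_simps)
qed

lemma half_angle_relation:
  "sin_half_dih 1 * cos_half_len 1 * cos_half_dih 0 * sin_half_len 0 =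
   cos_half_dih 1 * sin_half_len 1 * sin_half_dih 0 * cos_half_len 0"
proof (rule power2_eq_imp_eq)
  have p0: "(sin_half_dih 0)\<^sup>2 * sum_gram_det = (sin_height 0 * cos_half_len 1)\<^sup>2"
    and p1: "(sin_half_dih 1)\<^sup>2 * sum_gram_det = (sin_height 1 * cos_half_len 0)\<^sup>2"
    and m0: "(cos_half_dih 0)\<^sup>2 * diff_gram_det = (sin_height 0 * sin_half_len 1)\<^sup>2"
    and m1: "(cos_half_dih 1)\<^sup>2 * diff_gram_det = (sin_height 1 * sin_half_len 0)\<^sup>2"
    using height_relations[of 0] height_relations[of 1] by simp_all
  have "sum_gram_det * diff_gram_det \<noteq> 0"
    using p0 m0 sin_height_pos[of 0] half_angles_pos[of 1] by auto
  moreover have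
    "(sin_half_dih 1 * cos_half_len 1 * cos_half_dih 0 * sin_half_len 0)\<^sup>2 * (sum_gram_det * diff_gram_det) =
      (cos_half_dih 1 * sin_half_len 1 * sin_half_dih 0 * cos_half_len 0)\<^sup>2 * (sum_gram_det * diff_gram_det)"
  proof -
    have "(sin_half_dih 1 * cos_half_len 1 * cos_half_dih 0 * sin_half_len 0)\<^sup>2 * (sum_gram_det * diff_gram_det) =
        ((sin_half_dih 1)\<^sup>2 * sum_gram_det) * ((cos_half_dih 0)\<^sup>2 * diff_gram_det) *
        (cos_half_len 1 * sin_half_len 0)\<^sup>2"
      by algebra
    also have "\<dots> = ((cos_half_dih 1)\<^sup>2 * diff_gram_det) * ((sin_half_dih 0)\<^sup>2 * sum_gram_det) *
        (sin_half_len 1 * cos_half_len 0)\<^sup>2"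
      unfolding p0 p1 m0 m1 by algebra
    also have "\<dots> =
        (cos_half_dih 1 * sin_half_len 1 * sin_half_dih 0 * cos_half_len 0)\<^sup>2 * (sum_gram_det * diff_gram_det)"
      by algebra
    finally show ?thesis .
  qed
  ultimately show "(sin_half_dih 1 * cos_half_len 1 * cos_half_dih 0 * sin_half_len 0)\<^sup>2 =
      (cos_half_dih 1 * sin_half_len 1 * sin_half_dih 0 * cos_half_len 0)\<^sup>2"
    by simp
  show "0 \<le> sin_half_dih 1 * cos_half_len 1 * cos_half_dih 0 * sin_half_len 0"
    "0 \<le> cos_half_dih 1 * sin_half_len 1 * sin_half_dih 0 * cos_half_len 0"
    using half_angles_pos[of 0] half_angles_pos[of 1] by simp_all
qed

definition "cos_half_len_diff = cos ((pair_len 0 - pair_len 1) / 2)"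
definition "cos_half_dih_diff = cos ((pair_dih 0 - pair_dih 1) / 2)"

lemma cos_half_sum_diff:
  "cos_half_len_diff = cos_half_len 0 * cos_half_len 1 + sin_half_len 0 * sin_half_len 1"
  "cos ((pair_len 0 + pair_len 1) / 2) = cos_half_len 0 * cos_half_len 1 - sin_half_len 0 * sin_half_len 1"
  "cos_half_dih_diff = cos_half_dih 0 * cos_half_dih 1 + sin_half_dih 0 * sin_half_dih 1"
  "cos ((pair_dih 0 + pair_dih 1) / 2) = cos_half_dih 0 * cos_half_dih 1 - sin_half_dih 0 * sin_half_dih 1"
  unfolding cos_half_len_diff_def cos_half_dih_diff_def
    cos_half_len_def sin_half_len_def cos_half_dih_def sin_half_dih_def
  by (simp_all add: diff_divide_distrib add_divide_distrib cos_diff cos_add)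

definition "len_cos_weight =
  sqrt (cos_half_len 0 * cos_half_len 1 / cos_half_len_diff)"
definition "len_sin_weight =
  sqrt (sin_half_len 0 * sin_half_len 1 / cos_half_len_diff)"
definition "dih_sin_weight =
  sqrt (sin_half_dih 0 * sin_half_dih 1 / cos_half_dih_diff)"
definition "dih_cos_weight =
  sqrt (cos_half_dih 0 * cos_half_dih 1 / cos_half_dih_diff)"

lemma cos_half_diff_pos:
  "0 < cos_half_len_diff" "0 < cos_half_dih_diff"
  using half_angles_pos[of 0] half_angles_pos[of 1] cos_half_sum_diff by (simp_all add: add_pos_pos)

lemma weights_sq:
  "len_cos_weight\<^sup>2 = cos_half_len 0 * cos_half_len 1 / cos_half_len_diff"
  "len_sin_weight\<^sup>2 = sin_half_len 0 * sin_half_len 1 / cos_half_len_diff"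
  "dih_sin_weight\<^sup>2 = sin_half_dih 0 * sin_half_dih 1 / cos_half_dih_diff"
  "dih_cos_weight\<^sup>2 = cos_half_dih 0 * cos_half_dih 1 / cos_half_dih_diff"
  using half_angles_pos[of 0] half_angles_pos[of 1] cos_half_diff_pos
  by (simp_all add: len_cos_weight_def len_sin_weight_def dih_sin_weight_def dih_cos_weight_def)

lemma weights_pos: "0 < len_cos_weight" "0 < len_sin_weight" "0 < dih_sin_weight" "0 < dih_cos_weight"
  using half_angles_pos[of 0] half_angles_pos[of 1] cos_half_diff_pos
  by (simp_all add: len_cos_weight_def len_sin_weight_def dih_sin_weight_def dih_cos_weight_def)

lemma weights_sum_diff:
  "len_cos_weight\<^sup>2 + len_sin_weight\<^sup>2 = 1"
  "len_cos_weight\<^sup>2 - len_sin_weight\<^sup>2 = cos ((pair_len 0 + pair_len 1) / 2) / cos_half_len_diff"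
  "dih_sin_weight\<^sup>2 + dih_cos_weight\<^sup>2 = 1"
  "dih_sin_weight\<^sup>2 - dih_cos_weight\<^sup>2 = - (cos ((pair_dih 0 + pair_dih 1) / 2) / cos_half_dih_diff)"
proof -
  have "len_cos_weight\<^sup>2 + len_sin_weight\<^sup>2 =
      (cos_half_len 0 * cos_half_len 1 + sin_half_len 0 * sin_half_len 1) / cos_half_len_diff"
    "len_cos_weight\<^sup>2 - len_sin_weight\<^sup>2 =
      (cos_half_len 0 * cos_half_len 1 - sin_half_len 0 * sin_half_len 1) / cos_half_len_diff"
    "dih_sin_weight\<^sup>2 + dih_cos_weight\<^sup>2 =
      (cos_half_dih 0 * cos_half_dih 1 + sin_half_dih 0 * sin_half_dih 1) / cos_half_dih_diff"
    "dih_sin_weight\<^sup>2 - dih_cos_weight\<^sup>2 =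
      - ((cos_half_dih 0 * cos_half_dih 1 - sin_half_dih 0 * sin_half_dih 1) / cos_half_dih_diff)"
    by (simp_all add: weights_sq add_divide_distrib diff_divide_distrib)
  then show "len_cos_weight\<^sup>2 + len_sin_weight\<^sup>2 = 1"
    "len_cos_weight\<^sup>2 - len_sin_weight\<^sup>2 = cos ((pair_len 0 + pair_len 1) / 2) / cos_half_len_diff"
    "dih_sin_weight\<^sup>2 + dih_cos_weight\<^sup>2 = 1"
    "dih_sin_weight\<^sup>2 - dih_cos_weight\<^sup>2 = - (cos ((pair_dih 0 + pair_dih 1) / 2) / cos_half_dih_diff)"
    using cos_half_sum_diff cos_half_diff_pos by simp_all
qed

lemma half_angle_products:
  assumes "k < 2"
  shows "sin_half_dih 0 * sin_half_dih 1 * cos_half_len 0 * cos_half_len 1 * (cos_half_dih k * sin_half_len k)\<^sup>2 =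
    cos_half_dih 0 * cos_half_dih 1 * sin_half_len 0 * sin_half_len 1 * (sin_half_dih k * cos_half_len k)\<^sup>2"
proof -
  consider "k = 0" | "k = 1" using assms by linarith
  then show ?thesis
  proof cases
    case 1
    show ?thesis unfolding \<open>k = 0\<close> using half_angle_relation by algebra
  next
    case 2
    show ?thesis unfolding \<open>k = 1\<close> using half_angle_relation by algebra
  qed
qed

lemma weights_relation:
  assumes "k < 2"
  shows "dih_sin_weight * len_cos_weight * cos_half_dih k * sin_half_len k =
    dih_cos_weight * len_sin_weight * sin_half_dih k * cos_half_len k"
proof (rule power2_eq_imp_eq)
  have "(dih_sin_weight * len_cos_weight * cos_half_dih k * sin_half_len k)\<^sup>2 =
      sin_half_dih 0 * sin_half_dih 1 * cos_half_len 0 * cos_half_len 1 * (cos_half_dih k * sin_half_len k)\<^sup>2 /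
      (cos_half_dih_diff * cos_half_len_diff)"
    by (simp add: power_mult_distrib weights_sq)
  also have "\<dots> = (dih_cos_weight * len_sin_weight * sin_half_dih k * cos_half_len k)\<^sup>2"
    using half_angle_products[OF assms] cos_half_diff_pos by (simp add: power_mult_distrib weights_sq)
  finally show "(dih_sin_weight * len_cos_weight * cos_half_dih k * sin_half_len k)\<^sup>2 =
      (dih_cos_weight * len_sin_weight * sin_half_dih k * cos_half_len k)\<^sup>2" .
  show "0 \<le> dih_sin_weight * len_cos_weight * cos_half_dih k * sin_half_len k"
    "0 \<le> dih_cos_weight * len_sin_weight * sin_half_dih k * cos_half_len k"
    using weights_pos half_angles_pos[OF assms] by simp_all
qed

definition companion :: "nat \<Rightarrow> real^4" where
  "companion = sym_frame (\<lambda>k. len_cos_weight / (2 * cos_half_len k))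
     (\<lambda>k. len_sin_weight / (2 * sin_half_len k)) vertex_sum vertex_diff"

definition companion_normal :: "nat \<Rightarrow> real^4" where
  "companion_normal = sym_frame (\<lambda>k. dih_sin_weight / (2 * sin_half_dih k))
     (\<lambda>k. dih_cos_weight / (2 * cos_half_dih k)) normal_sum normal_diff"

lemma companion_inner:
  assumes "i < 4" "j < 4"
  shows "companion i \<bullet> companion j =
    sym_pattern 1 (cos ((pair_len 0 + pair_len 1) / 2) / cos_half_len_diff)
      (cos (edge_len p 0 2) / cos_half_len_diff)
      (cos (edge_len p 0 3) / cos_half_len_diff) i j"
proof -
  define d where "d = cos_half_len_diff"
  define b where "b = cos (edge_len p 0 2)"
  define c where "c = cos (edge_len p 0 3)"
  define m where "m k = len_cos_weight / (2 * cos_half_len k)" for k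
  define n where "n k = len_sin_weight / (2 * sin_half_len k)" for k
  have ij: "i div 2 < 2" "j div 2 < 2"
    using assms by auto
  have "companion i \<bullet> companion j =
      m (i div 2) * m (j div 2) * (vertex_sum (i div 2) \<bullet> vertex_sum (j div 2)) +
      (-1) ^ (i + j) * (n (i div 2) * n (j div 2) * (vertex_diff (i div 2) \<bullet> vertex_diff (j div 2)))"
    unfolding companion_def m_def n_def using pair_orthogonal(1,2)[OF ij] by (rule inner_sym_frame)
  also have "\<dots> = sym_pattern
      (len_cos_weight\<^sup>2 + len_sin_weight\<^sup>2) (len_cos_weight\<^sup>2 - len_sin_weight\<^sup>2)
      ((b + c) / (2 * d) + (b - c) / (2 * d)) ((b + c) / (2 * d) - (b - c) / (2 * d)) i j"
  proof (rule sym_pattern_eqI[OF assms,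
        where U = "\<lambda>k l. m k * m l * (vertex_sum k \<bullet> vertex_sum l)"
          and V = "\<lambda>k l. n k * n l * (vertex_diff k \<bullet> vertex_diff l)"])
    fix k l :: nat assume kl: "k < 2" "l < 2"
    have pos: "0 < cos_half_len 0" "0 < cos_half_len 1" "0 < sin_half_len 0" "0 < sin_half_len 1" "0 < d"
      using half_angles_pos[of 0] half_angles_pos[of 1] cos_half_diff_pos by (simp_all add: d_def)
    show "m k * m l * (vertex_sum k \<bullet> vertex_sum l) =
        (if k = l then len_cos_weight\<^sup>2 else (b + c) / (2 * d))"
      unfolding m_def pair_inner(1)[OF kl] b_def c_def
      by (rule scaled_pair_inner[OF kl pos(1,2,5)]) (simp add: weights_sq d_def)
    show "n k * n l * (vertex_diff k \<bullet> vertex_diff l) =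
        (if k = l then len_sin_weight\<^sup>2 else (b - c) / (2 * d))"
      unfolding n_def pair_inner(2)[OF kl] b_def c_def
      by (rule scaled_pair_inner[OF kl pos(3,4,5)]) (simp add: weights_sq d_def)
  qed
  also have "\<dots> = sym_pattern 1 (cos ((pair_len 0 + pair_len 1) / 2) / d) (b / d) (c / d) i j"
  proof -
    have "(b + c) / (2 * d) + (b - c) / (2 * d) = b / d"
      "(b + c) / (2 * d) - (b - c) / (2 * d) = c / d"
      by (simp_all flip: add_divide_distrib diff_divide_distrib)
    then show ?thesis by (simp only: weights_sum_diff(1,2) d_def)
  qed
  finally show ?thesis by (simp only: b_def c_def d_def)
qed

lemma companion_normal_inner:
  assumes "i < 4" "j < 4"
  shows "companion_normal i \<bullet> companion_normal j =
    sym_pattern 1 (- (cos ((pair_dih 0 + pair_dih 1) / 2) / cos_half_dih_diff))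
      (- (cos (dih p 1 3) / cos_half_dih_diff))
      (- (cos (dih p 1 2) / cos_half_dih_diff)) i j"
proof -
  define d where "d = cos_half_dih_diff"
  define b where "b = cos (dih p 1 3)"
  define c where "c = cos (dih p 1 2)"
  define r where "r k = dih_sin_weight / (2 * sin_half_dih k)" for k
  define z where "z k = dih_cos_weight / (2 * cos_half_dih k)" for k
  have ij: "i div 2 < 2" "j div 2 < 2"
    using assms by auto
  have "companion_normal i \<bullet> companion_normal j =
      r (i div 2) * r (j div 2) * (normal_sum (i div 2) \<bullet> normal_sum (j div 2)) +
      (-1) ^ (i + j) * (z (i div 2) * z (j div 2) * (normal_diff (i div 2) \<bullet> normal_diff (j div 2)))"
    unfolding companion_normal_def r_def z_def using pair_orthogonal(3,4)[OF ij] by (rule inner_sym_frame)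
  also have "\<dots> = sym_pattern
      (dih_sin_weight\<^sup>2 + dih_cos_weight\<^sup>2) (dih_sin_weight\<^sup>2 - dih_cos_weight\<^sup>2)
      ((- b - c) / (2 * d) + (c - b) / (2 * d)) ((- b - c) / (2 * d) - (c - b) / (2 * d)) i j"
  proof (rule sym_pattern_eqI[OF assms,
        where U = "\<lambda>k l. r k * r l * (normal_sum k \<bullet> normal_sum l)"
          and V = "\<lambda>k l. z k * z l * (normal_diff k \<bullet> normal_diff l)"])
    fix k l :: nat assume kl: "k < 2" "l < 2"
    have pos: "0 < sin_half_dih 0" "0 < sin_half_dih 1" "0 < cos_half_dih 0" "0 < cos_half_dih 1" "0 < d"
      using half_angles_pos[of 0] half_angles_pos[of 1] cos_half_diff_pos by (simp_all add: d_def)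
    show "r k * r l * (normal_sum k \<bullet> normal_sum l) =
        (if k = l then dih_sin_weight\<^sup>2 else (- b - c) / (2 * d))"
      unfolding r_def pair_inner(3)[OF kl] b_def c_def
      by (rule scaled_pair_inner[OF kl pos(1,2,5)]) (simp add: weights_sq d_def)
    show "z k * z l * (normal_diff k \<bullet> normal_diff l) =
        (if k = l then dih_cos_weight\<^sup>2 else (c - b) / (2 * d))"
      unfolding z_def pair_inner(4)[OF kl] b_def c_def
      by (rule scaled_pair_inner[OF kl pos(3,4,5)]) (simp add: weights_sq d_def)
  qed
  also have "\<dots> = sym_pattern 1 (- (cos ((pair_dih 0 + pair_dih 1) / 2) / d)) (- (b / d)) (- (c / d)) i j"
  proof -
    have "(- b - c) / (2 * d) + (c - b) / (2 * d) = - (b / d)"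
      "(- b - c) / (2 * d) - (c - b) / (2 * d) = - (c / d)"
      by (simp_all flip: add_divide_distrib diff_divide_distrib)
    then show ?thesis by (simp only: weights_sum_diff(3,4) d_def)
  qed
  finally show ?thesis by (simp only: b_def c_def d_def)
qed

lemma companion_normal_vertex:
  assumes "i < 4" "j < 4"
  shows "companion_normal i \<bullet> companion j = (if i = j then
    - sin_height (i div 2) * dih_sin_weight * len_cos_weight /
      (sin_half_dih (i div 2) * cos_half_len (i div 2))
    else 0)"
proof -
  define r where "r k = dih_sin_weight / (2 * sin_half_dih k)" for k
  define z where "z k = dih_cos_weight / (2 * cos_half_dih k)" for k
  define m where "m k = len_cos_weight / (2 * cos_half_len k)" for k
  define n where "n k = len_sin_weight / (2 * sin_half_len k)" for k
  have ij: "i div 2 < 2" "j div 2 < 2"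
    using assms by auto
  have "companion_normal i \<bullet> companion j =
      r (i div 2) * m (j div 2) * (normal_sum (i div 2) \<bullet> vertex_sum (j div 2)) +
      (-1) ^ (i + j) * (z (i div 2) * n (j div 2) * (normal_diff (i div 2) \<bullet> vertex_diff (j div 2)))"
    unfolding companion_normal_def companion_def r_def z_def m_def n_def
    using pair_orthogonal(5,6)[OF ij] by (rule inner_sym_frame)
  also have "\<dots> = (if i div 2 = j div 2 then
      - 2 * sin_height (i div 2) * r (i div 2) * m (i div 2) * (1 + (-1) ^ (i + j)) else 0)"
  proof -
    have "r k * m k = z k * n k" if "k < 2" for k
      using weights_relation[OF that] half_angles_pos[OF that]
      by (simp add: r_def z_def m_def n_def field_simps)
    then show ?thesis
      using ij by (simp add: pair_inner(5,6)[OF ij] algebra_simps)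
  qed
  also have "\<dots> = (if i = j then - 4 * sin_height (i div 2) * r (i div 2) * m (i div 2) else 0)"
  proof -
    have "odd (i + j)" if "i div 2 = j div 2" "i \<noteq> j"
      using that by presburger
    then show ?thesis by auto
  qed
  finally show ?thesis
    by (simp add: r_def m_def)
qed

lemma companion_normal_vertex_neg: "i < 4 \<Longrightarrow> companion_normal i \<bullet> companion i < 0"
  using companion_normal_vertex[of i i] sin_height_pos[of "i div 2"] half_angles_pos[of "i div 2"]
    weights_pos
  by (simp add: divide_neg_pos mult_pos_pos)

lemma companion_unit: "i < 4 \<Longrightarrow> norm (companion i) = 1"
  and companion_normal_unit: "i < 4 \<Longrightarrow> norm (companion_normal i) = 1"
  by (simp_all add: norm_eq_sqrt_inner companion_inner companion_normal_inner sym_pattern_def)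

lemma companion_normal_orthogonal:
  "i < 4 \<Longrightarrow> j < 4 \<Longrightarrow> j \<noteq> i \<Longrightarrow> companion_normal i \<bullet> companion j = 0"
  by (simp add: companion_normal_vertex)

lemma companion_tetrahedron: "spherical_tetrahedron companion"
  by (rule spherical_tetrahedronI_biorthogonal[OF companion_unit companion_normal_orthogonal
        less_imp_neq[OF companion_normal_vertex_neg]])

lemma outer_normal_companion: "i < 4 \<Longrightarrow> outer_normal companion i = companion_normal i"
  using companion_normal_unit companion_normal_orthogonal companion_normal_vertex_neg
  by (intro outer_normal_eqI[OF companion_tetrahedron]) auto

theorem symmetric_companion:
  "\<exists>q. spherical_tetrahedron q \<and> (\<forall>i<4. \<forall>j<4.
    gram_matrix q i j =
      sym_pattern 1 (- (cos ((pair_dih 0 + pair_dih 1) / 2) / cos_half_dih_diff))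
        (- (cos (dih p 1 3) / cos_half_dih_diff))
        (- (cos (dih p 1 2) / cos_half_dih_diff)) i j \<and>
    edge_matrix q i j =
      sym_pattern 1 (cos ((pair_len 0 + pair_len 1) / 2) / cos_half_len_diff)
        (cos (edge_len p 0 2) / cos_half_len_diff)
        (cos (edge_len p 0 3) / cos_half_len_diff) i j)"
  using companion_tetrahedron companion_inner companion_normal_inner outer_normal_companion
  by (intro exI[of _ companion]) (simp add: gram_matrix_def edge_matrix_def)

end

theorem lemma4:
  fixes p :: "nat \<Rightarrow> real^4"
  assumes "spherical_tetrahedron p" and "Z2_symmetric p"
  defines "lA \<equiv> edge_len p 0 1" and "lB \<equiv> edge_len p 0 2"
      and "lC \<equiv> edge_len p 0 3" and "lD \<equiv> edge_len p 2 3"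
      and "A \<equiv> dih p 2 3" and "B \<equiv> dih p 1 3"
      and "C \<equiv> dih p 1 2" and "D \<equiv> dih p 0 1"
  defines "ap \<equiv> cos ((lA + lD) / 2)" and "am \<equiv> cos ((lA - lD) / 2)"
      and "b \<equiv> cos lB" and "c \<equiv> cos lC"
      and "Ap \<equiv> cos ((A + D) / 2)" and "Am \<equiv> cos ((D - A) / 2)"
      and "Bc \<equiv> cos B" and "Cc \<equiv> cos C"
  shows "\<exists>q :: nat \<Rightarrow> real^4. spherical_tetrahedron q \<and>
    (\<exists>\<alpha> \<beta> \<gamma> l\<alpha> l\<beta> l\<gamma>.
       dih q 0 1 = \<alpha> \<and> dih q 2 3 = \<alpha> \<and> dih q 0 2 = \<beta> \<and> dih q 1 3 = \<beta> \<and>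
       dih q 0 3 = \<gamma> \<and> dih q 1 2 = \<gamma> \<and>
       edge_len q 0 1 = l\<alpha> \<and> edge_len q 2 3 = l\<alpha> \<and> edge_len q 0 2 = l\<beta> \<and>
       edge_len q 1 3 = l\<beta> \<and> edge_len q 0 3 = l\<gamma> \<and> edge_len q 1 2 = l\<gamma> \<and>
       (\<forall>i<4. \<forall>j<4.
          gram_matrix q i j = sym_pattern 1 (- cos \<alpha>) (- cos \<beta>) (- cos \<gamma>) i j \<and>
          gram_matrix q i j = sym_pattern 1 (- (Ap / Am)) (- (Bc / Am)) (- (Cc / Am)) i j \<and>
          edge_matrix q i j = sym_pattern 1 (cos l\<alpha>) (cos l\<beta>) (cos l\<gamma>) i j \<and>
          edge_matrix q i j = sym_pattern 1 (ap / am) (b / am) (c / am) i j))"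
proof -
  interpret Z2_symmetric_tetrahedron p
    using assms(1,2) by unfold_locales
  have "pair_len 0 = lA" "pair_len 1 = lD" "pair_dih 0 = D" "pair_dih 1 = A"
    using pair_simps by (simp_all add: lA_def lD_def A_def D_def)
  then obtain q where "spherical_tetrahedron q" and "\<forall>i<4. \<forall>j<4.
      gram_matrix q i j = sym_pattern 1 (- (Ap / Am)) (- (Bc / Am)) (- (Cc / Am)) i j \<and>
      edge_matrix q i j = sym_pattern 1 (ap / am) (b / am) (c / am) i j"
    using symmetric_companion
    by (auto simp: cos_half_len_diff_def cos_half_dih_diff_def ap_def am_def b_def c_def Ap_def Am_def
        Bc_def Cc_def lB_def lC_def B_def C_def add.commute)
  then show ?thesis
    by (intro exI[of _ q] conjI symmetric_tetrahedron_angles) auto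
qed

end
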